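(* In every 2-connected partial 2-tree (series-parallel graph) $G$, all longest cycles have a common vertex, i.e. $\mathrm{lct}(G)\le 1$.
   Context: A $k$-tree is defined recursively: the complete graph on $k$ vertices is a $k$-tree, and adding a new vertex adjacent to exactly the vertices of an existing $k$-clique of a $k$-tree yields a $k$-tree. A partial $k$-tree is a subgraph of a $k$-tree. $\mathrm{lct}(G)$ is the minimum cardinality of a set of vertices intersecting every longest cycle of $G$. *)

theory Defs
  imports Main
begin

definition graph :: "'a set \<Rightarrow> 'a set set \<Rightarrow> bool" where
  "graph V E \<longleftrightarrow> finite V \<and> (\<forall>e\<in>E. \<exists>u v. u \<noteq> v \<and> e = {u, v} \<and> u \<in> V \<and> v \<in> V)"

definition complete_edges :: "'a set \<Rightarrow> 'a set set" where
  "complete_edges V = {{u, v} | u v. u \<in> V \<and> v \<in> V \<and> u \<noteq> v}"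

definition is_clique :: "'a set set \<Rightarrow> 'a set \<Rightarrow> bool" where
  "is_clique E C \<longleftrightarrow> (\<forall>u\<in>C. \<forall>v\<in>C. u \<noteq> v \<longrightarrow> {u, v} \<in> E)"

inductive k_tree :: "nat \<Rightarrow> 'a set \<Rightarrow> 'a set set \<Rightarrow> bool" for k :: nat where
  base: "finite V \<Longrightarrow> card V = k \<Longrightarrow> k_tree k V (complete_edges V)"
| step: "k_tree k V E \<Longrightarrow> C \<subseteq> V \<Longrightarrow> card C = k \<Longrightarrow> is_clique E C \<Longrightarrow> v \<notin> V \<Longrightarrow>
         k_tree k (insert v V) (E \<union> {{v, c} | c. c \<in> C})"

definition partial_k_tree :: "nat \<Rightarrow> 'a set \<Rightarrow> 'a set set \<Rightarrow> bool" where
  "partial_k_tree k V E \<longleftrightarrow> (\<exists>V' E'. k_tree k V' E' \<and> V \<subseteq> V' \<and> E \<subseteq> E')"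

definition connected_graph :: "'a set \<Rightarrow> 'a set set \<Rightarrow> bool" where
  "connected_graph V E \<longleftrightarrow> V \<noteq> {} \<and>
     (\<forall>u\<in>V. \<forall>v\<in>V. (\<lambda>x y. x \<in> V \<and> y \<in> V \<and> {x, y} \<in> E)\<^sup>*\<^sup>* u v)"

definition del_vertex_edges :: "'a set set \<Rightarrow> 'a \<Rightarrow> 'a set set" where
  "del_vertex_edges E x = {e \<in> E. x \<notin> e}"

definition two_connected :: "'a set \<Rightarrow> 'a set set \<Rightarrow> bool" where
  "two_connected V E \<longleftrightarrow> card V \<ge> 3 \<and> connected_graph V E \<and>
     (\<forall>x\<in>V. connected_graph (V - {x}) (del_vertex_edges E x))"

definition is_cycle :: "'a set \<Rightarrow> 'a set set \<Rightarrow> 'a list \<Rightarrow> bool" where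
  "is_cycle V E c \<longleftrightarrow> length c \<ge> 3 \<and> distinct c \<and> set c \<subseteq> V \<and>
     (\<forall>i < length c. {c ! i, c ! ((i + 1) mod length c)} \<in> E)"

definition longest_cycle :: "'a set \<Rightarrow> 'a set set \<Rightarrow> 'a list \<Rightarrow> bool" where
  "longest_cycle V E c \<longleftrightarrow> is_cycle V E c \<and> (\<forall>d. is_cycle V E d \<longrightarrow> length d \<le> length c)"

end

theory Submission
  imports Defs
begin

text \<open>We prove a stronger statement for graphs with positive edge weights, by induction along the
  construction of the ambient 2-tree. If G has at least four vertices, the vertex v added last to
  the 2-tree has degree exactly 2 in G, with neighbours a and b. Suppressing v (deleting it and
  giving the edge ab the weight max(w(ab), w(va) + w(vb))) yields a smaller 2-connected partial
  2-tree whose maximum-weight cycles have the same weight as those of G and correspond to them.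
  The invariant carried through the induction is: the maximum-weight cycles have a common
  vertex; an edge weighing at least half of their weight has both ends on each of them, and one
  weighing more than half lies on each of them; any two edges together weigh less than them.
  The base case is the triangle, and the theorem is the case of unit weights.\<close>

section \<open>Edges of paths and cycles\<close>

fun path_edges :: "'a list \<Rightarrow> 'a set set" where
  "path_edges (x # y # zs) = insert {x, y} (path_edges (y # zs))"
| "path_edges _ = {}"

definition cycle_edges :: "'a list \<Rightarrow> 'a set set" where
  "cycle_edges c = path_edges (c @ [hd c])"

lemma path_edges_snoc: "xs \<noteq> [] \<Longrightarrow> path_edges (xs @ [y]) = insert {last xs, y} (path_edges xs)"
  by (induction xs rule: path_edges.induct) auto

lemma path_edges_Cons: "xs \<noteq> [] \<Longrightarrow> path_edges (x # xs) = insert {x, hd xs} (path_edges xs)"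
  by (cases xs) auto

lemma cycle_edges_eq: "c \<noteq> [] \<Longrightarrow> cycle_edges c = insert {last c, hd c} (path_edges c)"
  by (simp add: cycle_edges_def path_edges_snoc)

lemma path_edges_subset_set: "e \<in> path_edges xs \<Longrightarrow> e \<subseteq> set xs"
  by (induction xs rule: path_edges.induct) auto

lemma cycle_edges_subset_set:
  assumes "e \<in> cycle_edges c"
  shows "e \<subseteq> set c"
proof (cases "c = []")
  case False
  then show ?thesis using assms cycle_edges_eq path_edges_subset_set by fastforce
qed (use assms in \<open>simp add: cycle_edges_def\<close>)

lemma finite_path_edges: "finite (path_edges xs)"
  by (induction xs rule: path_edges.induct) auto

lemma finite_cycle_edges: "finite (cycle_edges c)"
  by (simp add: cycle_edges_def finite_path_edges)

lemma set_subset_Union_path_edges: "2 \<le> length xs \<Longrightarrow> set xs \<subseteq> \<Union>(path_edges xs)"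
proof (induction xs rule: path_edges.induct)
  case (1 x y zs)
  then show ?case by (cases zs) auto
qed auto

lemma set_subset_Union_cycle_edges: "2 \<le> length c \<Longrightarrow> set c \<subseteq> \<Union>(cycle_edges c)"
  using set_subset_Union_path_edges[of c] cycle_edges_eq[of c] by fastforce

lemma card_path_edges: "distinct xs \<Longrightarrow> card (path_edges xs) = length xs - 1"
proof (induction xs rule: path_edges.induct)
  case (1 x y zs)
  have "{x, y} \<notin> path_edges (y # zs)" using 1(2) path_edges_subset_set by fastforce
  then show ?case using 1 by (simp add: finite_path_edges)
qed auto

lemma path_edges_split: "e \<in> path_edges xs \<Longrightarrow> \<exists>l x y r. xs = l @ x # y # r \<and> e = {x, y}"
proof (induction xs rule: path_edges.induct)
  case (1 x y zs)
  show ?case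
  proof (cases "e = {x, y}")
    case True then show ?thesis by (metis append_Nil)
  next
    case False
    then obtain l a b r where "y # zs = l @ a # b # r" "e = {a, b}" using 1 by auto
    then show ?thesis by (metis append_Cons)
  qed
qed auto

lemma closing_edge_notin_path_edges:
  assumes "distinct c" "3 \<le> length c"
  shows "{last c, hd c} \<notin> path_edges c"
proof
  assume "{last c, hd c} \<in> path_edges c"
  then obtain l x y r where c: "c = l @ x # y # r" and e: "{last c, hd c} = {x, y}"
    using path_edges_split by blast
  have last: "last c = last (y # r)" and hd: "l \<noteq> [] \<Longrightarrow> hd c = hd l"
    using c by simp_all
  have "x \<notin> set (y # r)" "x \<notin> set l" "y \<notin> set r" "y \<notin> set l" using assms(1) c by auto
  moreover from e have "(last c = x \<and> hd c = y) \<or> (last c = y \<and> hd c = x)"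
    by (auto simp: doubleton_eq_iff)
  ultimately have "l = [] \<and> r = []"
    using last hd by (metis hd_in_set last_in_set last_ConsR list.distinct(1) list.set_intros(1))
  then show False using assms(2) c by simp
qed

lemma card_cycle_edges:
  assumes "distinct c" "3 \<le> length c"
  shows "card (cycle_edges c) = length c"
proof -
  have "c \<noteq> []" using assms(2) by auto
  then show ?thesis
    using assms(2) cycle_edges_eq[of c] closing_edge_notin_path_edges[OF assms] card_path_edges[OF assms(1)]
    by (simp add: finite_path_edges)
qed

lemma cycle_edges_rotate1: "cycle_edges (rotate1 c) = cycle_edges c"
proof (cases c)
  case (Cons x xs)
  show ?thesis
  proof (cases "xs = []")
    case False
    then show ?thesis
      using Cons by (auto simp: cycle_edges_eq path_edges_snoc path_edges_Cons)
  qed (use Cons in simp)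
qed simp

lemma cycle_edges_append_commute: "cycle_edges (l @ q) = cycle_edges (q @ l)"
proof -
  have "cycle_edges (rotate n c) = cycle_edges c" for n and c :: "'a list"
    by (induction n) (auto simp: cycle_edges_rotate1)
  from this[of "length l" "l @ q"] show ?thesis by (simp add: rotate_append)
qed

lemma cycle_rotate_to_last:
  assumes "distinct c" "v \<in> set c"
  obtains xs where "cycle_edges (xs @ [v]) = cycle_edges c" "set (xs @ [v]) = set c"
    "length (xs @ [v]) = length c" "distinct (xs @ [v])"
proof -
  obtain l r where c: "c = l @ v # r" using split_list[OF assms(2)] by blast
  have "cycle_edges ((r @ l) @ [v]) = cycle_edges c"
    using cycle_edges_append_commute[of "l @ [v]" r] c by simp
  then show ?thesis by (rule that[of "r @ l"]) (use assms(1) c in auto)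
qed

lemma cycle_rotate_to_closing_edge:
  assumes "e \<in> cycle_edges c" "distinct c" "c \<noteq> []"
  obtains c' where "cycle_edges c' = cycle_edges c" "set c' = set c" "length c' = length c"
    "distinct c'" "c' \<noteq> []" "e = {last c', hd c'}"
proof (cases "e = {last c, hd c}")
  case False
  then have "e \<in> path_edges c" using assms cycle_edges_eq by auto
  then obtain l x y r where c: "c = l @ x # y # r" and e: "e = {x, y}"
    using path_edges_split by blast
  let ?c = "(y # r) @ (l @ [x])"
  have "cycle_edges ?c = cycle_edges c" using cycle_edges_append_commute[of "l @ [x]" "y # r"] c by simp
  then show ?thesis by (rule that[of ?c]) (use assms(2) c e in auto)
qed (use assms in blast)

lemma path_edges_conv_nth: "path_edges xs = (\<lambda>i. {xs ! i, xs ! Suc i}) ` {..<length xs - 1}"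
  by (induction xs rule: path_edges.induct) (auto simp: lessThan_Suc_eq_insert_0 image_image)

lemma cycle_edges_conv_nth:
  assumes "c \<noteq> []"
  shows "cycle_edges c = (\<lambda>i. {c ! i, c ! (Suc i mod length c)}) ` {..<length c}"
proof -
  have "(c @ [hd c]) ! Suc i = c ! (Suc i mod length c)" if "i < length c" for i
    using that assms by (cases "Suc i = length c") (auto simp: nth_append hd_conv_nth)
  moreover have "(c @ [hd c]) ! i = c ! i" if "i < length c" for i
    using that by (simp add: nth_append)
  ultimately show ?thesis
    unfolding cycle_edges_def path_edges_conv_nth by (intro image_cong) auto
qed

section \<open>Maximum-weight cycles\<close>

definition cycle_in :: "'a set set \<Rightarrow> 'a list \<Rightarrow> bool" where
  "cycle_in E c \<longleftrightarrow> 3 \<le> length c \<and> distinct c \<and> cycle_edges c \<subseteq> E"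

definition cycle_weight :: "('a set \<Rightarrow> nat) \<Rightarrow> 'a list \<Rightarrow> nat" where
  "cycle_weight w c = sum w (cycle_edges c)"

definition max_cycle :: "'a set set \<Rightarrow> ('a set \<Rightarrow> nat) \<Rightarrow> 'a list \<Rightarrow> bool" where
  "max_cycle E w c \<longleftrightarrow> cycle_in E c \<and> (\<forall>d. cycle_in E d \<longrightarrow> cycle_weight w d \<le> cycle_weight w c)"

lemma is_cycle_iff_cycle_in:
  assumes "graph V E"
  shows "is_cycle V E c \<longleftrightarrow> cycle_in E c"
proof
  assume c: "is_cycle V E c"
  then have "c \<noteq> []" by (auto simp: is_cycle_def)
  with c show "cycle_in E c" by (auto simp: is_cycle_def cycle_in_def cycle_edges_conv_nth)
next
  assume c: "cycle_in E c"
  then have "c \<noteq> []" by (auto simp: cycle_in_def)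
  have "set c \<subseteq> \<Union>(cycle_edges c)" using c by (intro set_subset_Union_cycle_edges) (simp add: cycle_in_def)
  also have "\<dots> \<subseteq> V" using c assms by (fastforce simp: cycle_in_def graph_def)
  finally show "is_cycle V E c"
    using c \<open>c \<noteq> []\<close> by (auto simp: is_cycle_def cycle_in_def cycle_edges_conv_nth)
qed

lemma cycle_weight_one: "cycle_in E c \<Longrightarrow> cycle_weight (\<lambda>_. 1) c = length c"
  by (simp add: cycle_weight_def cycle_in_def card_cycle_edges)

lemma cycle_in_set_subset: "cycle_in E c \<Longrightarrow> set c \<subseteq> \<Union>E"
  using set_subset_Union_cycle_edges[of c] by (auto simp: cycle_in_def)

lemma finite_cycles_in:
  assumes "finite (\<Union>E)"
  shows "finite {c. cycle_in E c}"
proof -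
  have "length c \<le> card (\<Union>E)" if "cycle_in E c" for c
    using that distinct_card[of c] card_mono[OF assms cycle_in_set_subset[OF that]]
    by (simp add: cycle_in_def)
  then have "{c. cycle_in E c} \<subseteq> {xs. set xs \<subseteq> \<Union>E \<and> length xs \<le> card (\<Union>E)}"
    using cycle_in_set_subset by blast
  then show ?thesis using finite_lists_length_le[OF assms] finite_subset by blast
qed

lemma max_cycle_exists:
  assumes "finite (\<Union>E)" "cycle_in E c"
  obtains d where "max_cycle E w d"
proof -
  let ?W = "cycle_weight w ` {c. cycle_in E c}"
  have "finite ?W" "?W \<noteq> {}" using finite_cycles_in[OF assms(1)] assms(2) by auto
  then have "Max ?W \<in> ?W" by (rule Max_in)
  then obtain d where "cycle_in E d" "cycle_weight w d = Max ?W" by auto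
  with \<open>finite ?W\<close> show ?thesis by (intro that[of d]) (auto simp: max_cycle_def)
qed

lemma max_cycle_weight_eq: "max_cycle E w c \<Longrightarrow> max_cycle E w d \<Longrightarrow> cycle_weight w c = cycle_weight w d"
  by (auto simp: max_cycle_def intro: antisym)

definition max_cycle_invariant :: "'a set set \<Rightarrow> ('a set \<Rightarrow> nat) \<Rightarrow> bool" where
  "max_cycle_invariant E w \<longleftrightarrow> (\<exists>c. cycle_in E c)
    \<and> (\<exists>x. \<forall>c. max_cycle E w c \<longrightarrow> x \<in> set c)
    \<and> (\<forall>e\<in>E. \<forall>c. max_cycle E w c \<longrightarrow> cycle_weight w c \<le> 2 * w e \<longrightarrow> e \<subseteq> set c)
    \<and> (\<forall>e\<in>E. \<forall>c. max_cycle E w c \<longrightarrow> cycle_weight w c < 2 * w e \<longrightarrow> e \<in> cycle_edges c)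
    \<and> (\<forall>e\<in>E. \<forall>f\<in>E. \<forall>c. e \<noteq> f \<longrightarrow> max_cycle E w c \<longrightarrow> w e + w f < cycle_weight w c)"

lemma max_cycle_invariantD:
  assumes "max_cycle_invariant E w"
  shows "\<exists>c. cycle_in E c" "\<exists>x. \<forall>c. max_cycle E w c \<longrightarrow> x \<in> set c"
    "e \<in> E \<Longrightarrow> max_cycle E w c \<Longrightarrow> cycle_weight w c \<le> 2 * w e \<Longrightarrow> e \<subseteq> set c"
    "e \<in> E \<Longrightarrow> max_cycle E w c \<Longrightarrow> cycle_weight w c < 2 * w e \<Longrightarrow> e \<in> cycle_edges c"
    "e \<in> E \<Longrightarrow> f \<in> E \<Longrightarrow> e \<noteq> f \<Longrightarrow> max_cycle E w c \<Longrightarrow> w e + w f < cycle_weight w c"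
  using assms unfolding max_cycle_invariant_def by simp_all

section \<open>Suppressing a vertex of degree two\<close>

lemma connected_graph_retract:
  assumes conn: "connected_graph W F"
    and maps: "\<And>y. y \<in> W \<Longrightarrow> f y \<in> W'"
    and fixed: "\<And>u. u \<in> W' \<Longrightarrow> u \<in> W \<and> f u = u"
    and edges: "\<And>y z. y \<in> W \<Longrightarrow> z \<in> W \<Longrightarrow> {y, z} \<in> F \<Longrightarrow> f y = f z \<or> {f y, f z} \<in> F'"
  shows "connected_graph W' F'"
proof -
  let ?R = "\<lambda>x y. x \<in> W \<and> y \<in> W \<and> {x, y} \<in> F"
  let ?R' = "\<lambda>x y. x \<in> W' \<and> y \<in> W' \<and> {x, y} \<in> F'"
  have walk: "?R'\<^sup>*\<^sup>* (f u) (f u')" if "?R\<^sup>*\<^sup>* u u'" for u u'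
    using that
  proof (induction rule: rtranclp_induct)
    case (step y z)
    then have "f y = f z \<or> {f y, f z} \<in> F'" and "f y \<in> W'" "f z \<in> W'"
      using edges[of y z] maps by simp_all
    then show ?case using step.IH by (auto intro: rtranclp.rtrancl_into_rtrancl)
  qed simp
  have "W' \<noteq> {}" using conn maps by (auto simp: connected_graph_def)
  moreover have "?R'\<^sup>*\<^sup>* u u'" if "u \<in> W'" "u' \<in> W'" for u u'
    using walk[of u u'] conn fixed[OF that(1)] fixed[OF that(2)] by (simp add: connected_graph_def)
  ultimately show ?thesis by (simp add: connected_graph_def)
qed

lemma two_connected_other_neighbour:
  assumes g: "graph V E" and t: "two_connected V E" and v: "v \<in> V"
  obtains z where "z \<noteq> u" "{v, z} \<in> E"
proof -
  have "V - {u, v} \<noteq> {}"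
  proof
    assume "V - {u, v} = {}"
    then have "card V \<le> card {u, v}" by (intro card_mono) auto
    also have "\<dots> \<le> 2" by (simp add: card_insert_le_m1)
    finally show False using t by (simp add: two_connected_def)
  qed
  then obtain y where y: "y \<in> V" "y \<noteq> u" "y \<noteq> v" by blast
  show ?thesis
  proof (cases "u \<in> V \<and> u \<noteq> v")
    case True
    then have "connected_graph (V - {u}) (del_vertex_edges E u)" using t by (simp add: two_connected_def)
    then have "(\<lambda>x y. x \<in> V - {u} \<and> y \<in> V - {u} \<and> {x, y} \<in> del_vertex_edges E u)\<^sup>*\<^sup>* v y"
      using v y True unfolding connected_graph_def by blast
    then show ?thesis
      by (cases rule: converse_rtranclpE) (use y that in \<open>auto simp: del_vertex_edges_def\<close>)
  next
    case False
    have "(\<lambda>x y. x \<in> V \<and> y \<in> V \<and> {x, y} \<in> E)\<^sup>*\<^sup>* v y"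
      using t v y unfolding two_connected_def connected_graph_def by blast
    then show ?thesis
    proof (cases rule: converse_rtranclpE)
      case (step z)
      have "z \<noteq> v" using step g by (fastforce simp: graph_def doubleton_eq_iff)
      then show ?thesis using False step by (intro that[of z]) auto
    qed (use y in simp)
  qed
qed

locale degree_two_vertex =
  fixes E :: "'a set set" and v a b :: 'a
  assumes a_neq_b: "a \<noteq> b" and a_neq_v: "a \<noteq> v" and b_neq_v: "b \<noteq> v"
    and edge_va: "{v, a} \<in> E" and edge_vb: "{v, b} \<in> E"
    and neighbour_cases: "\<And>z. {v, z} \<in> E \<Longrightarrow> z = a \<or> z = b"
begin

definition E' :: "'a set set" where
  "E' = insert {a, b} {e \<in> E. v \<notin> e}"

lemma ab_in_E': "{a, b} \<in> E'"
  by (simp add: E'_def)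

lemma v_notin_E'_edge: "e \<in> E' \<Longrightarrow> v \<notin> e"
  using a_neq_v b_neq_v by (auto simp: E'_def)

lemma triangle_edges_distinct: "{v, a} \<noteq> {v, b}" "{v, a} \<noteq> {a, b}" "{v, b} \<noteq> {a, b}"
  using a_neq_b a_neq_v b_neq_v by (auto simp: doubleton_eq_iff)

lemma cycle_in_E'_if_avoids_v: "cycle_in E c \<Longrightarrow> v \<notin> set c \<Longrightarrow> cycle_in E' c"
  using cycle_edges_subset_set by (fastforce simp: cycle_in_def E'_def)

lemma v_notin_cycle_in_E': "cycle_in E' d \<Longrightarrow> v \<notin> set d"
  using set_subset_Union_cycle_edges[of d] v_notin_E'_edge by (fastforce simp: cycle_in_def)

lemma cycle_in_E_if_cycle_in_E': "cycle_in E' d \<Longrightarrow> {a, b} \<notin> cycle_edges d \<or> {a, b} \<in> E \<Longrightarrow> cycle_in E d"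
  by (auto simp: cycle_in_def E'_def)

lemma cycle_through_v_shortcut:
  assumes c: "cycle_in E c" and "v \<in> set c" "4 \<le> length c"
  obtains d P where "cycle_in E' d" "set d = set c - {v}" "cycle_edges d = insert {a, b} P"
    "{a, b} \<notin> P" "cycle_edges c = insert {v, a} (insert {v, b} P)" "\<forall>e\<in>P. v \<notin> e"
proof -
  have "distinct c" using c by (simp add: cycle_in_def)
  from this \<open>v \<in> set c\<close> obtain xs where xs: "cycle_edges (xs @ [v]) = cycle_edges c"
    "set (xs @ [v]) = set c" "length (xs @ [v]) = length c" "distinct (xs @ [v])"
    by (rule cycle_rotate_to_last)
  have ne: "xs \<noteq> []" and len: "3 \<le> length xs" and dxs: "distinct xs" "v \<notin> set xs"
    using xs(3,4) assms(3) by auto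
  have ce: "cycle_edges c = insert {v, hd xs} (insert {last xs, v} (path_edges xs))"
    using xs(1) ne by (simp add: cycle_edges_eq path_edges_snoc)
  have "{v, hd xs} \<in> E" "{v, last xs} \<in> E" using c ce by (auto simp: cycle_in_def insert_commute)
  moreover have "hd xs \<noteq> last xs"
    using dxs(1) len ne by (simp add: hd_conv_nth last_conv_nth nth_eq_iff_index_eq)
  ultimately have "(hd xs = a \<and> last xs = b) \<or> (hd xs = b \<and> last xs = a)"
    using neighbour_cases by blast
  then have ends: "{last xs, hd xs} = {a, b}"
    and ce_c: "cycle_edges c = insert {v, a} (insert {v, b} (path_edges xs))"
    using ce by (auto simp: insert_commute)
  have ce_xs: "cycle_edges xs = insert {a, b} (path_edges xs)" using cycle_edges_eq[OF ne] ends by simp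
  have v: "\<forall>e\<in>path_edges xs. v \<notin> e" using dxs(2) by (auto dest: path_edges_subset_set)
  show ?thesis
  proof (rule that)
    show "{a, b} \<notin> path_edges xs" using closing_edge_notin_path_edges[OF dxs(1) len] ends by simp
    have "path_edges xs \<subseteq> E" using c ce_c by (simp add: cycle_in_def)
    then show "cycle_in E' xs" using len dxs(1) ce_xs v by (auto simp: cycle_in_def E'_def)
    show "set xs = set c - {v}" using xs(2) dxs(2) by auto
  qed (fact ce_xs ce_c v)+
qed

lemma cycle_through_ab_expand:
  assumes d: "cycle_in E' d" and ab: "{a, b} \<in> cycle_edges d"
  obtains c P where "cycle_in E c" "cycle_edges d = insert {a, b} P" "{a, b} \<notin> P"
    "cycle_edges c = insert {v, a} (insert {v, b} P)" "\<forall>e\<in>P. v \<notin> e"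
proof -
  have "distinct d" "d \<noteq> []" using d by (auto simp: cycle_in_def)
  with ab obtain d' where d': "cycle_edges d' = cycle_edges d" "set d' = set d"
    "length d' = length d" "distinct d'" "d' \<noteq> []" "{a, b} = {last d', hd d'}"
    by (rule cycle_rotate_to_closing_edge)
  have v: "v \<notin> set d'" using v_notin_cycle_in_E'[OF d] d'(2) by simp
  have len: "3 \<le> length d'" using d d'(3) by (simp add: cycle_in_def)
  let ?P = "path_edges d'"
  have ce: "cycle_edges d = insert {a, b} ?P" using cycle_edges_eq[OF d'(5)] d'(1,6) by simp
  have P: "{a, b} \<notin> ?P" using closing_edge_notin_path_edges[OF d'(4) len] d'(6) by simp
  have ce': "cycle_edges (d' @ [v]) = insert {v, a} (insert {v, b} ?P)"
    using d'(5,6) by (auto simp: cycle_edges_eq path_edges_snoc doubleton_eq_iff)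
  have "?P \<subseteq> E" using d ce P by (auto simp: cycle_in_def E'_def)
  then have "cycle_in E (d' @ [v])" using ce' len d'(4) v edge_va edge_vb by (simp add: cycle_in_def)
  moreover have "\<forall>e\<in>?P. v \<notin> e" using v by (auto dest: path_edges_subset_set)
  ultimately show ?thesis using that ce P ce' by blast
qed

lemma triangle_through_v:
  assumes c: "cycle_in E c" and "v \<in> set c" "length c = 3"
  shows "{a, b} \<in> E" "cycle_edges c = {{v, a}, {v, b}, {a, b}}" "set c = {v, a, b}"
proof -
  have "distinct c" using c by (simp add: cycle_in_def)
  from this \<open>v \<in> set c\<close> obtain xs where xs: "cycle_edges (xs @ [v]) = cycle_edges c"
    "set (xs @ [v]) = set c" "length (xs @ [v]) = length c" "distinct (xs @ [v])"
    by (rule cycle_rotate_to_last)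
  then obtain x y where "xs = [x, y]" using assms(3)
    by (auto simp: numeral_2_eq_2 length_Suc_conv)
  with xs have ce: "cycle_edges c = {{v, x}, {v, y}, {x, y}}" and set: "set c = {v, x, y}"
    and "x \<noteq> y"
    by (auto simp: cycle_edges_def insert_commute)
  moreover have "{v, x} \<in> E" "{v, y} \<in> E" "{x, y} \<in> E" using c ce by (auto simp: cycle_in_def)
  ultimately have "(x = a \<and> y = b) \<or> (x = b \<and> y = a)"
    using neighbour_cases[of x] neighbour_cases[of y] by blast
  then show "{a, b} \<in> E" "cycle_edges c = {{v, a}, {v, b}, {a, b}}" "set c = {v, a, b}"
    using ce set \<open>{x, y} \<in> E\<close> by (elim disjE; simp add: insert_commute)+
qed

lemma suppress_edge_image:
  assumes yz: "{y, z} \<in> E" and p: "p = a \<or> p = b"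
  shows "(if y = v then p else y) = (if z = v then p else z)
    \<or> {if y = v then p else y, if z = v then p else z} \<in> E'"
proof -
  have v_edge: "u \<noteq> v \<and> (u = p \<or> {p, u} = {a, b})" if "{v, u} \<in> E" for u
    using neighbour_cases[OF that] neighbour_cases[of v] p a_neq_v b_neq_v by auto
  consider "y = v" | "z = v" | "y \<noteq> v" "z \<noteq> v" by blast
  then show ?thesis
  proof cases
    case 1
    then show ?thesis using v_edge[of z] yz ab_in_E' by auto
  next
    case 2
    then show ?thesis using v_edge[of y] yz ab_in_E' by (auto simp: insert_commute)
  next
    case 3
    then show ?thesis using yz by (simp add: E'_def)
  qed
qed

lemma graph_E':
  assumes g: "graph V E" and "v \<in> V"
  shows "graph (V - {v}) E'"
proof -
  have "a \<in> V" "b \<in> V" using g edge_va edge_vb by (auto simp: graph_def doubleton_eq_iff)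
  then show ?thesis
    using g a_neq_b a_neq_v b_neq_v unfolding graph_def E'_def by fastforce
qed

lemma two_connected_E':
  assumes g: "graph V E" and t: "two_connected V E" and v: "v \<in> V" and card: "4 \<le> card V"
  shows "two_connected (V - {v}) E'"
proof -
  have ab: "a \<in> V" "b \<in> V" using g edge_va edge_vb by (auto simp: graph_def doubleton_eq_iff)
  have "3 \<le> card (V - {v})" using card v g by (simp add: graph_def)
  moreover have "connected_graph (V - {v}) E'"
    by (rule connected_graph_retract[of V E "\<lambda>u. if u = v then a else u"])
      (use t ab a_neq_v suppress_edge_image in \<open>auto simp: two_connected_def\<close>)
  moreover have "connected_graph (V - {v} - {x}) (del_vertex_edges E' x)" if x: "x \<in> V - {v}" for x
  proof -
    define p where "p = (if x = a then b else a)"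
    have p: "p = a \<or> p = b" "p \<in> V - {v} - {x}" using ab a_neq_b a_neq_v b_neq_v x by (auto simp: p_def)
    let ?f = "\<lambda>u. if u = v then p else u"
    have maps: "?f y \<in> V - {v} - {x}" if "y \<in> V - {x}" for y using that p by auto
    show ?thesis
    proof (rule connected_graph_retract[of "V - {x}" "del_vertex_edges E x" ?f])
      show "connected_graph (V - {x}) (del_vertex_edges E x)" using t x by (simp add: two_connected_def)
      fix y z assume yz: "y \<in> V - {x}" "z \<in> V - {x}" "{y, z} \<in> del_vertex_edges E x"
      then have "?f y = ?f z \<or> {?f y, ?f z} \<in> E'"
        using suppress_edge_image[OF _ p(1)] by (simp add: del_vertex_edges_def)
      then show "?f y = ?f z \<or> {?f y, ?f z} \<in> del_vertex_edges E' x"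
        using maps[OF yz(1)] maps[OF yz(2)] by (auto simp: del_vertex_edges_def)
    qed (use maps x in auto)
  qed
  ultimately show ?thesis unfolding two_connected_def by blast
qed

end

locale weighted_degree_two_vertex = degree_two_vertex +
  fixes w :: "'a set \<Rightarrow> nat"
  assumes weight_pos: "\<And>e. e \<in> E \<Longrightarrow> 0 < w e"
    and finite_vertices: "finite (\<Union>E)"
    and edges_doubleton: "\<And>e. e \<in> E \<Longrightarrow> \<exists>x y. x \<noteq> y \<and> e = {x, y}"
begin

abbreviation "wva \<equiv> w {v, a}"
abbreviation "wvb \<equiv> w {v, b}"
abbreviation "wab \<equiv> w {a, b}"

definition merged_weight :: nat where
  "merged_weight = (if {a, b} \<in> E then max wab (wva + wvb) else wva + wvb)"

definition w' :: "'a set \<Rightarrow> nat" where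
  "w' = w({a, b} := merged_weight)"

lemma wva_pos: "0 < wva" and wvb_pos: "0 < wvb"
  using weight_pos edge_va edge_vb by auto

lemma merged_weight_ge: "wva + wvb \<le> merged_weight" "{a, b} \<in> E \<Longrightarrow> wab \<le> merged_weight"
  by (auto simp: merged_weight_def)

lemma merged_weight_cases: "merged_weight = wva + wvb \<or> ({a, b} \<in> E \<and> merged_weight = wab)"
  by (auto simp: merged_weight_def)

lemma w'_ab: "w' {a, b} = merged_weight"
  by (simp add: w'_def)

lemma w'_eq: "e \<noteq> {a, b} \<Longrightarrow> w' e = w e"
  by (simp add: w'_def)

lemma w'_pos: "e \<in> E' \<Longrightarrow> 0 < w' e"
  using merged_weight_ge(1) wva_pos weight_pos by (cases "e = {a, b}") (auto simp: w'_ab w'_eq E'_def)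

lemma finite_vertices_E': "finite (\<Union>E')"
proof -
  have "\<Union>E' \<subseteq> \<Union>E" using edge_va edge_vb by (auto simp: E'_def)
  then show ?thesis using finite_vertices by (rule finite_subset)
qed

lemma edge_cases:
  assumes "e \<in> E"
  obtains "e = {v, a} \<or> e = {v, b}" | "e = {a, b}" | "e \<in> E'" "e \<noteq> {a, b}" "w' e = w e"
proof (cases "v \<in> e")
  case True
  obtain x y where "x \<noteq> y" "e = {x, y}" using edges_doubleton[OF assms] by blast
  with True obtain z where "e = {v, z}" by (metis doubleton_eq_iff insertE singletonD)
  then show ?thesis using that neighbour_cases assms by blast
qed (use that assms in \<open>auto simp: E'_def w'_def\<close>)

lemma cycle_weight_triangle: "cycle_edges c = {{v, a}, {v, b}, {a, b}} \<Longrightarrow> cycle_weight w c = wva + wvb + wab"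
  using triangle_edges_distinct by (simp add: cycle_weight_def)

lemma triangle_cycle: "{a, b} \<in> E \<Longrightarrow> cycle_in E [v, a, b]"
  using edge_va edge_vb a_neq_b a_neq_v b_neq_v by (simp add: cycle_in_def cycle_edges_def insert_commute)

lemma triangle_weight_le_max: "{a, b} \<in> E \<Longrightarrow> max_cycle E w c \<Longrightarrow> wva + wvb + wab \<le> cycle_weight w c"
  using triangle_cycle cycle_weight_triangle[of "[v, a, b]"]
  by (fastforce simp: max_cycle_def cycle_edges_def insert_commute)

lemma cycle_weight_split_v:
  assumes "cycle_edges c = insert {v, a} (insert {v, b} P)" "\<forall>e\<in>P. v \<notin> e"
  shows "cycle_weight w c = wva + wvb + sum w P"
proof -
  have "finite P" using assms(1) finite_cycle_edges[of c] by (metis finite_insert)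
  moreover have "{v, a} \<notin> P" "{v, b} \<notin> P" using assms(2) by auto
  ultimately show ?thesis using assms(1) triangle_edges_distinct by (simp add: cycle_weight_def)
qed

lemma cycle_weight'_split_ab:
  assumes "cycle_edges d = insert {a, b} P" "{a, b} \<notin> P"
  shows "cycle_weight w' d = merged_weight + sum w P"
proof -
  have "finite P" using assms(1) finite_cycle_edges[of d] by (metis finite_insert)
  moreover have "sum w' P = sum w P" using assms(2) by (intro sum.cong) (auto simp: w'_def)
  ultimately show ?thesis using assms by (simp add: cycle_weight_def w'_ab)
qed

lemma cycle_weight'_eq: "{a, b} \<notin> cycle_edges c \<Longrightarrow> cycle_weight w' c = cycle_weight w c"
  unfolding cycle_weight_def by (intro sum.cong) (auto simp: w'_def)

lemma cycle_weight'_through_ab: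
  assumes "{a, b} \<in> cycle_edges c"
  shows "cycle_weight w' c + wab = cycle_weight w c + merged_weight"
proof -
  have "sum w' (cycle_edges c - {{a, b}}) = sum w (cycle_edges c - {{a, b}})"
    by (intro sum.cong) (auto simp: w'_def)
  then show ?thesis
    unfolding cycle_weight_def
    using sum.remove[OF finite_cycle_edges assms, of w'] sum.remove[OF finite_cycle_edges assms, of w]
    by (simp add: w'_ab)
qed

lemma cycle_in_E'_lift:
  assumes d: "cycle_in E' d"
  obtains c where "cycle_in E c" "cycle_weight w c = cycle_weight w' d"
proof (cases "{a, b} \<in> cycle_edges d \<and> merged_weight = wva + wvb")
  case True
  then obtain c P where c: "cycle_in E c" "cycle_edges d = insert {a, b} P" "{a, b} \<notin> P"
    "cycle_edges c = insert {v, a} (insert {v, b} P)" "\<forall>e\<in>P. v \<notin> e"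
    using cycle_through_ab_expand[OF d] by blast
  have "cycle_weight w c = cycle_weight w' d"
    using c True by (simp add: cycle_weight_split_v cycle_weight'_split_ab)
  then show ?thesis by (rule that[OF c(1)])
next
  case False
  have "cycle_in E d \<and> cycle_weight w d = cycle_weight w' d"
  proof (cases "{a, b} \<in> cycle_edges d")
    case True
    with False have "{a, b} \<in> E" "merged_weight = wab" using merged_weight_cases by auto
    then show ?thesis using cycle_in_E_if_cycle_in_E'[OF d] cycle_weight'_through_ab[OF True] by simp
  qed (use cycle_in_E_if_cycle_in_E'[OF d] cycle_weight'_eq in simp)
  then show ?thesis using that by blast
qed

lemma cycle_weight'_le_max: "cycle_in E' d \<Longrightarrow> max_cycle E w c \<Longrightarrow> cycle_weight w' d \<le> cycle_weight w c"
  by (metis cycle_in_E'_lift max_cycle_def)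

lemma max_cycle_avoiding_v:
  assumes c: "max_cycle E w c" and v: "v \<notin> set c"
  shows "max_cycle E' w' c" "cycle_weight w' c = cycle_weight w c"
    "{a, b} \<in> cycle_edges c \<Longrightarrow> merged_weight = wab"
proof -
  have cc: "cycle_in E c" and c': "cycle_in E' c"
    using c cycle_in_E'_if_avoids_v v by (auto simp: max_cycle_def)
  have ge: "cycle_weight w c \<le> cycle_weight w' c"
  proof (cases "{a, b} \<in> cycle_edges c")
    case True
    then have "{a, b} \<in> E" using cc by (auto simp: cycle_in_def)
    then show ?thesis using cycle_weight'_through_ab[OF True] merged_weight_ge(2) by simp
  qed (simp add: cycle_weight'_eq)
  moreover have le: "cycle_weight w' c \<le> cycle_weight w c" using cycle_weight'_le_max[OF c' c] .
  ultimately show "cycle_weight w' c = cycle_weight w c" by simp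
  show "max_cycle E' w' c"
    using c' ge cycle_weight'_le_max[OF _ c] by (auto simp: max_cycle_def intro: order_trans)
  show "merged_weight = wab" if "{a, b} \<in> cycle_edges c"
    using cycle_weight'_through_ab[OF that] ge le by simp
qed

lemma max_cycle_through_v:
  assumes c: "max_cycle E w c" and v: "v \<in> set c" and len: "4 \<le> length c"
  obtains d where "max_cycle E' w' d" "cycle_weight w' d = cycle_weight w c" "set d \<subseteq> set c"
    "{v, a} \<in> cycle_edges c" "{v, b} \<in> cycle_edges c"
    "\<forall>e\<in>cycle_edges d. e \<noteq> {a, b} \<longrightarrow> e \<in> cycle_edges c" "merged_weight = wva + wvb"
proof -
  have cc: "cycle_in E c" using c by (simp add: max_cycle_def)
  obtain d P where d: "cycle_in E' d" "set d = set c - {v}" "cycle_edges d = insert {a, b} P"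
    "{a, b} \<notin> P" "cycle_edges c = insert {v, a} (insert {v, b} P)" "\<forall>e\<in>P. v \<notin> e"
    using cycle_through_v_shortcut[OF cc v len] by blast
  have eq: "cycle_weight w' d + wva + wvb = cycle_weight w c + merged_weight"
    using cycle_weight_split_v[OF d(5,6)] cycle_weight'_split_ab[OF d(3,4)] by simp
  then have ge: "cycle_weight w c \<le> cycle_weight w' d" using merged_weight_ge(1) by simp
  moreover have le: "cycle_weight w' d \<le> cycle_weight w c" using cycle_weight'_le_max[OF d(1) c] .
  moreover have "max_cycle E' w' d"
    using d(1) ge cycle_weight'_le_max[OF _ c] by (auto simp: max_cycle_def intro: order_trans)
  ultimately show ?thesis by (intro that[of d]) (use eq d(2,3,5) in auto)
qed

lemma max_cycle_contract:
  assumes c: "max_cycle E w c" and not_triangle: "\<not> (v \<in> set c \<and> length c = 3)"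
  obtains d where "max_cycle E' w' d" "cycle_weight w' d = cycle_weight w c" "set d \<subseteq> set c"
    "\<forall>e\<in>cycle_edges d. e \<noteq> {a, b} \<longrightarrow> e \<in> cycle_edges c"
    "v \<in> set c \<Longrightarrow> {v, a} \<in> cycle_edges c \<and> {v, b} \<in> cycle_edges c \<and> merged_weight = wva + wvb"
    "v \<notin> set c \<Longrightarrow> d = c"
proof (cases "v \<in> set c")
  case True
  then have "4 \<le> length c" using c not_triangle by (fastforce simp: max_cycle_def cycle_in_def)
  with c True obtain d where d: "max_cycle E' w' d" "cycle_weight w' d = cycle_weight w c"
    "set d \<subseteq> set c" "{v, a} \<in> cycle_edges c" "{v, b} \<in> cycle_edges c"
    "\<forall>e\<in>cycle_edges d. e \<noteq> {a, b} \<longrightarrow> e \<in> cycle_edges c" "merged_weight = wva + wvb"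
    by (rule max_cycle_through_v)
  show ?thesis by (rule that[OF d(1,2,3,6)]) (use d True in auto)
next
  case False
  show ?thesis by (rule that[of c]) (use max_cycle_avoiding_v[OF c False] False in auto)
qed

end

section \<open>The invariant survives suppression\<close>

locale suppression_step = weighted_degree_two_vertex +
  assumes invariant_E': "max_cycle_invariant E' w'"
begin

lemmas E'_has_cycle = max_cycle_invariantD(1)[OF invariant_E']
  and E'_common_vertex = max_cycle_invariantD(2)[OF invariant_E']
  and E'_heavy_edge_ends = max_cycle_invariantD(3)[OF invariant_E']
  and E'_heavy_edge_on_cycle = max_cycle_invariantD(4)[OF invariant_E']
  and E'_two_edges = max_cycle_invariantD(5)[OF invariant_E']

lemma E'_max_cycle_exists:
  obtains d where "max_cycle E' w' d"
proof -
  obtain c where "cycle_in E' c" using E'_has_cycle by blast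
  with finite_vertices_E' obtain d where "max_cycle E' w' d" by (rule max_cycle_exists)
  then show ?thesis by (rule that)
qed

lemma E'_max_cycle_le:
  assumes "max_cycle E w c"
  obtains d where "max_cycle E' w' d" "cycle_weight w' d \<le> cycle_weight w c"
  by (metis E'_max_cycle_exists assms cycle_weight'_le_max max_cycle_def)

lemma light_edge_if_triangle_max:
  assumes c: "max_cycle E w c" and tri: "cycle_weight w c = wva + wvb + wab" "{a, b} \<in> E"
    and e: "e \<in> E'" "e \<noteq> {a, b}"
  shows "2 * w' e < cycle_weight w c"
proof -
  obtain d where d: "max_cycle E' w' d" "cycle_weight w' d \<le> cycle_weight w c"
    using E'_max_cycle_le[OF c] .
  have "w' e + merged_weight < cycle_weight w c"
    using E'_two_edges[OF e(1) ab_in_E' e(2) d(1)] d(2) w'_ab by simp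
  then show ?thesis using tri merged_weight_ge by linarith
qed

lemma v_on_max_cycle_if_heavy_v_edge:
  assumes d: "max_cycle E w d" and e: "e = {v, a} \<or> e = {v, b}" and heavy: "cycle_weight w d \<le> 2 * w e"
  shows "v \<in> set d"
proof (rule ccontr)
  assume v: "v \<notin> set d"
  note d' = max_cycle_avoiding_v[OF d v]
  have light: "w e < wva + wvb" using e wva_pos wvb_pos by auto
  then have "cycle_weight w' d < 2 * w' {a, b}" using heavy d'(2) merged_weight_ge(1) w'_ab by simp
  then have ab: "{a, b} \<in> cycle_edges d" using E'_heavy_edge_on_cycle[OF ab_in_E' d'(1)] by simp
  then have "{a, b} \<in> E" "merged_weight = wab" using d d'(3) by (auto simp: max_cycle_def cycle_in_def)
  with triangle_weight_le_max[OF _ d] show False using light heavy merged_weight_ge(1) by linarith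
qed

lemma max_triangle_through_v:
  assumes d: "max_cycle E w d" and "v \<in> set d" "length d = 3"
  shows "{a, b} \<in> E" "cycle_edges d = {{v, a}, {v, b}, {a, b}}" "set d = {v, a, b}"
    "cycle_weight w d = wva + wvb + wab"
  using triangle_through_v[of d] cycle_weight_triangle[of d] assms by (auto simp: max_cycle_def)

lemma common_vertex: "\<exists>x. \<forall>c. max_cycle E w c \<longrightarrow> x \<in> set c"
proof (cases "\<exists>T. max_cycle E w T \<and> v \<in> set T \<and> length T = 3")
  case True
  then obtain T where T: "max_cycle E w T" "v \<in> set T" "length T = 3" by blast
  note t = max_triangle_through_v[OF T]
  have "a \<in> set c" if c: "max_cycle E w c" for c
  proof (cases "v \<in> set c \<and> length c = 3")
    case True
    then show ?thesis using max_triangle_through_v(3)[OF c] by auto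
  next
    case False
    then obtain d where d: "max_cycle E' w' d" "cycle_weight w' d = cycle_weight w c" "set d \<subseteq> set c"
      using max_cycle_contract[OF c] by blast
    have "cycle_weight w' d \<le> 2 * w' {a, b}"
      using d(2) max_cycle_weight_eq[OF c T(1)] t(1,4) merged_weight_ge w'_ab by simp
    then show ?thesis using E'_heavy_edge_ends[OF ab_in_E' d(1)] d(3) by auto
  qed
  then show ?thesis by blast
next
  case False
  obtain x where x: "\<forall>d. max_cycle E' w' d \<longrightarrow> x \<in> set d"
    using E'_common_vertex by blast
  have "x \<in> set c" if c: "max_cycle E w c" for c
  proof -
    have "\<not> (v \<in> set c \<and> length c = 3)" using False c by blast
    then obtain d where "max_cycle E' w' d" "set d \<subseteq> set c"
      using max_cycle_contract[OF c] by blast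
    then show ?thesis using x by blast
  qed
  then show ?thesis by blast
qed

lemma heavy_edge_ends_on_max_cycle:
  assumes e: "e \<in> E" and d: "max_cycle E w d" and heavy: "cycle_weight w d \<le> 2 * w e"
  shows "e \<subseteq> set d"
proof (cases "v \<in> set d \<and> length d = 3")
  case True
  note t = max_triangle_through_v[OF d conjunct1[OF True] conjunct2[OF True]]
  from e show ?thesis
  proof (cases rule: edge_cases)
    case 3
    then have "2 * w e < cycle_weight w d" using light_edge_if_triangle_max[OF d t(4,1) 3(1,2)] by simp
    with heavy show ?thesis by simp
  qed (use t(3) in auto)
next
  case False
  then obtain d' where d': "max_cycle E' w' d'" "cycle_weight w' d' = cycle_weight w d" "set d' \<subseteq> set d"
    "v \<in> set d \<Longrightarrow> {v, a} \<in> cycle_edges d \<and> {v, b} \<in> cycle_edges d"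
    using max_cycle_contract[OF d] by blast
  from e show ?thesis
  proof (cases rule: edge_cases)
    case 1
    then have "v \<in> set d" using v_on_max_cycle_if_heavy_v_edge[OF d _ heavy] by blast
    then show ?thesis using 1 d'(4) cycle_edges_subset_set by blast
  next
    case 2
    then have "cycle_weight w' d' \<le> 2 * w' {a, b}" using heavy d'(2) merged_weight_ge(2) e w'_ab by simp
    then show ?thesis using E'_heavy_edge_ends[OF ab_in_E' d'(1)] d'(3) 2 by blast
  next
    case 3
    then show ?thesis using E'_heavy_edge_ends[OF _ d'(1)] heavy d'(2,3) by fastforce
  qed
qed

lemma heavy_edge_on_max_cycle:
  assumes e: "e \<in> E" and d: "max_cycle E w d" and heavy: "cycle_weight w d < 2 * w e"
  shows "e \<in> cycle_edges d"
proof (cases "v \<in> set d \<and> length d = 3")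
  case True
  note t = max_triangle_through_v[OF d conjunct1[OF True] conjunct2[OF True]]
  from e show ?thesis
  proof (cases rule: edge_cases)
    case 3
    then have "2 * w e < cycle_weight w d" using light_edge_if_triangle_max[OF d t(4,1) 3(1,2)] by simp
    with heavy show ?thesis by simp
  qed (use t(2) in auto)
next
  case False
  then obtain d' where d': "max_cycle E' w' d'" "cycle_weight w' d' = cycle_weight w d"
    "\<forall>e\<in>cycle_edges d'. e \<noteq> {a, b} \<longrightarrow> e \<in> cycle_edges d"
    "v \<in> set d \<Longrightarrow> {v, a} \<in> cycle_edges d \<and> {v, b} \<in> cycle_edges d \<and> merged_weight = wva + wvb"
    "v \<notin> set d \<Longrightarrow> d' = d"
    using max_cycle_contract[OF d] by blast
  from e show ?thesis
  proof (cases rule: edge_cases)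
    case 1
    then have "v \<in> set d" using v_on_max_cycle_if_heavy_v_edge[OF d] heavy by fastforce
    then show ?thesis using 1 d'(4) by blast
  next
    case 2
    then have "cycle_weight w' d' < 2 * w' {a, b}" using heavy d'(2) merged_weight_ge(2) e w'_ab by simp
    then have ab: "{a, b} \<in> cycle_edges d'" using E'_heavy_edge_on_cycle[OF ab_in_E' d'(1)] by blast
    have "v \<notin> set d"
    proof
      assume "v \<in> set d"
      then have "merged_weight = wva + wvb" using d'(4) by blast
      then show False
        using triangle_weight_le_max[OF _ d] e 2 heavy merged_weight_ge(2) by fastforce
    qed
    then show ?thesis using ab d'(5) 2 by simp
  next
    case 3
    then show ?thesis using E'_heavy_edge_on_cycle[OF _ d'(1)] heavy d'(2,3) by fastforce
  qed
qed

lemma two_edges_lighter_than_max_cycle: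
  assumes e: "e \<in> E" and f: "f \<in> E" and ef: "e \<noteq> f" and c: "max_cycle E w c"
  shows "w e + w f < cycle_weight w c"
proof -
  obtain d where d: "max_cycle E' w' d" "cycle_weight w' d \<le> cycle_weight w c"
    using E'_max_cycle_le[OF c] .
  let ?T = "{{v, a}, {v, b}, {a, b}}"
  define merge where "merge g = (if g \<in> E' then g else {a, b})" for g
  have merge: "merge g \<in> E' \<and> w g \<le> w' (merge g) \<and> (merge g = {a, b} \<longleftrightarrow> g \<in> ?T)"
    if g: "g \<in> E" for g
    using g
  proof (cases rule: edge_cases)
    case 1
    then have "g \<notin> E'" using v_notin_E'_edge by auto
    then show ?thesis using 1 ab_in_E' merged_weight_ge(1) by (auto simp: merge_def w'_ab)
  next
    case 2
    then show ?thesis using g ab_in_E' merged_weight_ge(2) by (simp add: merge_def w'_ab)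
  next
    case 3
    then have "g \<notin> ?T" using v_notin_E'_edge by auto
    then show ?thesis using 3 by (simp add: merge_def)
  qed
  show ?thesis
  proof (cases "merge e = merge f")
    case False
    have m: "merge e \<in> E'" "merge f \<in> E'" "w e \<le> w' (merge e)" "w f \<le> w' (merge f)"
      using merge[OF e] merge[OF f] by auto
    have "w' (merge e) + w' (merge f) < cycle_weight w' d" by (rule E'_two_edges[OF m(1,2) False d(1)])
    then show ?thesis using m(3,4) d(2) by linarith
  next
    case True
    have "merge g = g" if "merge g \<noteq> {a, b}" for g using that by (simp add: merge_def split: if_splits)
    then have "merge e = {a, b}" using True ef by metis
    then have S: "e \<in> ?T" "f \<in> ?T" using True merge[OF e] merge[OF f] by auto
    show ?thesis
    proof (cases "{a, b} \<in> E")
      case True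
      have "0 < wab" using weight_pos True by simp
      then show ?thesis
        using S ef wva_pos wvb_pos triangle_weight_le_max[OF True c] by auto
    next
      case False
      then have "w e + w f = merged_weight"
        using S e f ef merged_weight_cases by (auto simp: insert_commute)
      have "\<not> cycle_edges d \<subseteq> {{a, b}}"
      proof
        assume "cycle_edges d \<subseteq> {{a, b}}"
        then have "card (cycle_edges d) \<le> 1" using card_mono[of "{{a, b}}"] by fastforce
        moreover have "card (cycle_edges d) = length d" "3 \<le> length d"
          using d(1) card_cycle_edges by (auto simp: max_cycle_def cycle_in_def)
        ultimately show False by simp
      qed
      then obtain g where g: "g \<in> cycle_edges d" "g \<noteq> {a, b}" by blast
      have "g \<in> E'" using g d(1) by (auto simp: max_cycle_def cycle_in_def)
      then have "w' {a, b} + w' g < cycle_weight w' d" using E'_two_edges[OF ab_in_E' _ _ d(1)] g(2) by metis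
      then show ?thesis using \<open>w e + w f = merged_weight\<close> d(2) w'_ab by simp
    qed
  qed
qed

lemma max_cycle_invariant_E: "max_cycle_invariant E w"
proof -
  obtain d where "max_cycle E' w' d" by (rule E'_max_cycle_exists)
  then obtain c where "cycle_in E c" using cycle_in_E'_lift by (metis max_cycle_def)
  then show ?thesis
    unfolding max_cycle_invariant_def
    using common_vertex heavy_edge_ends_on_max_cycle heavy_edge_on_max_cycle
      two_edges_lighter_than_max_cycle
    by blast
qed

end

section \<open>Induction along the 2-tree\<close>

lemma k_tree_edges_subset: "k_tree k V E \<Longrightarrow> e \<in> E \<Longrightarrow> e \<subseteq> V"
  by (induction rule: k_tree.induct) (auto simp: complete_edges_def)

lemma k_tree_step_degree_two_vertex:
  assumes kt: "k_tree 2 V0 E0" and C: "C \<subseteq> V0" "card C = 2" "is_clique E0 C" and v: "v \<notin> V0"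
    and g: "graph V E" and t: "two_connected V E" and vV: "v \<in> V"
    and sub: "E \<subseteq> E0 \<union> {{v, c} | c. c \<in> C}"
  obtains a b where "C = {a, b}" "{a, b} \<in> E0" "degree_two_vertex E v a b"
proof -
  obtain a b where ab: "C = {a, b}" "a \<noteq> b" using C(2) card_2_iff by metis
  have "a \<in> V0" "b \<in> V0" using C(1) ab by auto
  then have av: "a \<noteq> v" "b \<noteq> v" using v by auto
  have nbr: "z = a \<or> z = b" if z: "{v, z} \<in> E" for z
  proof -
    have "{v, z} \<notin> E0" using k_tree_edges_subset[OF kt] v by blast
    then obtain c where "c \<in> C" "{v, z} = {v, c}" using sub z by blast
    moreover have "c \<noteq> v" using \<open>c \<in> C\<close> C(1) v by blast
    ultimately show ?thesis using ab by (auto simp: doubleton_eq_iff)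
  qed
  obtain za where "za \<noteq> b" "{v, za} \<in> E" by (rule two_connected_other_neighbour[OF g t vV])
  then have "{v, a} \<in> E" using nbr by blast
  moreover obtain zb where "zb \<noteq> a" "{v, zb} \<in> E" by (rule two_connected_other_neighbour[OF g t vV])
  then have "{v, b} \<in> E" using nbr by blast
  ultimately have deg: "degree_two_vertex E v a b" using ab(2) av nbr by unfold_locales
  have "{a, b} \<in> E0" using C(3) ab by (simp add: is_clique_def)
  from ab(1) this deg show ?thesis by (rule that)
qed

lemma two_connected_three_vertices:
  assumes g: "graph V E" and t: "two_connected V E" and V: "card V = 3"
  obtains c where "cycle_in E c" "card E = 3" "\<forall>d. cycle_in E d \<longrightarrow> set d = V \<and> cycle_edges d = E"
proof -
  obtain x y z where xyz: "V = {x, y, z}" "x \<noteq> y" "y \<noteq> z" "x \<noteq> z"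
    using V by (auto simp: card_3_iff)
  have edge: "{p, q} \<in> E" if pq: "p \<in> V" "q \<in> V" "p \<noteq> q" for p q
  proof -
    have "\<exists>r\<in>V. r \<noteq> p \<and> r \<noteq> q" using xyz pq by auto
    then obtain r where r: "r \<in> V" "r \<noteq> p" "r \<noteq> q" by blast
    obtain u where u: "u \<noteq> r" "{p, u} \<in> E" by (rule two_connected_other_neighbour[OF g t pq(1)])
    then have "u \<in> V" "u \<noteq> p" using g by (auto simp: graph_def doubleton_eq_iff)
    then have "u = q" using xyz pq r u(1) by auto
    then show ?thesis using u(2) by simp
  qed
  have E: "E = {{x, y}, {y, z}, {z, x}}"
  proof
    show "E \<subseteq> {{x, y}, {y, z}, {z, x}}" using g xyz by (fastforce simp: graph_def insert_commute)
    show "{{x, y}, {y, z}, {z, x}} \<subseteq> E" using edge xyz by auto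
  qed
  have tri: "cycle_in E [x, y, z]" using xyz by (simp add: cycle_in_def cycle_edges_def E)
  have cardE: "card E = 3" using card_cycle_edges[of "[x, y, z]"] xyz by (simp add: cycle_edges_def E)
  have "set d = V \<and> cycle_edges d = E" if d: "cycle_in E d" for d
  proof -
    have sub: "set d \<subseteq> V" using cycle_in_set_subset[OF d] g by (auto simp: graph_def)
    moreover have "card V \<le> card (set d)" using d V distinct_card[of d] by (simp add: cycle_in_def)
    moreover have "finite V" using g by (simp add: graph_def)
    ultimately have "set d = V" using card_seteq by blast
    then have "card (cycle_edges d) = 3" using d V distinct_card[of d] card_cycle_edges[of d]
      by (simp add: cycle_in_def)
    then show ?thesis using d cardE \<open>set d = V\<close> card_subset_eq[of E "cycle_edges d"]
      by (auto simp: cycle_in_def E)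
  qed
  then show ?thesis using that tri cardE by blast
qed

lemma triangle_max_cycle_invariant:
  assumes g: "graph V E" and t: "two_connected V E" and V: "card V = 3" and pos: "\<forall>e\<in>E. 0 < w e"
  shows "max_cycle_invariant E w"
proof -
  obtain c where c: "cycle_in E c" and cardE: "card E = 3"
    and cycles: "\<forall>d. cycle_in E d \<longrightarrow> set d = V \<and> cycle_edges d = E"
    by (rule two_connected_three_vertices[OF g t V])
  have max: "set d = V \<and> cycle_edges d = E \<and> cycle_weight w d = sum w E" if "max_cycle E w d" for d
    using cycles that by (simp add: max_cycle_def cycle_weight_def)
  have two: "w e + w f < sum w E" if "e \<in> E" "f \<in> E" "e \<noteq> f" for e f
  proof -
    have "finite E" using cardE card_ge_0_finite[of E] by simp
    moreover have "E - {e, f} \<noteq> {}"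
    proof
      assume "E - {e, f} = {}"
      then have "card E \<le> card {e, f}" by (intro card_mono) auto
      also have "\<dots> \<le> 2" by (simp add: card_insert_le_m1)
      finally show False using cardE by simp
    qed
    ultimately have "0 < sum w (E - {e, f})" using pos by (intro sum_pos) auto
    moreover have "sum w E = sum w (E - {e, f}) + w e + w f"
      using sum.subset_diff[of "{e, f}" E w] \<open>finite E\<close> that by auto
    ultimately show ?thesis by simp
  qed
  obtain x where "x \<in> V" using V by fastforce
  have sub: "e \<subseteq> V" if "e \<in> E" for e using g that by (auto simp: graph_def)
  show ?thesis unfolding max_cycle_invariant_def
  proof (intro conjI)
    show "\<exists>c. cycle_in E c" using c by blast
    show "\<exists>x. \<forall>c. max_cycle E w c \<longrightarrow> x \<in> set c" using \<open>x \<in> V\<close> max by blast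
    show "\<forall>e\<in>E. \<forall>c. max_cycle E w c \<longrightarrow> cycle_weight w c \<le> 2 * w e \<longrightarrow> e \<subseteq> set c"
      using sub max by blast
    show "\<forall>e\<in>E. \<forall>c. max_cycle E w c \<longrightarrow> cycle_weight w c < 2 * w e \<longrightarrow> e \<in> cycle_edges c"
      using max by blast
    show "\<forall>e\<in>E. \<forall>f\<in>E. \<forall>c. e \<noteq> f \<longrightarrow> max_cycle E w c \<longrightarrow> w e + w f < cycle_weight w c"
      using two max by simp
  qed
qed

lemma partial_2_tree_max_cycle_invariant:
  assumes "k_tree 2 VH EH" "graph V E" "V \<subseteq> VH" "E \<subseteq> EH" "two_connected V E" "\<forall>e\<in>E. 0 < w e"
  shows "max_cycle_invariant E w"
  using assms
proof (induction arbitrary: V E w rule: k_tree.induct)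
  case (base VH)
  then have "card V \<le> 2" using card_mono[of VH V] by simp
  then show ?case using base by (simp add: two_connected_def)
next
  case (step V0 E0 C v)
  note g = step.prems(1) and t = step.prems(4)
  have "\<Union>E \<subseteq> V" "finite V" using g by (auto simp: graph_def)
  then have finite_E: "finite (\<Union>E)" by (rule finite_subset)
  show ?case
  proof (cases "v \<in> V")
    case False
    then have "V \<subseteq> V0" using step.prems(2) by auto
    moreover have "E \<subseteq> E0"
    proof
      fix e assume e: "e \<in> E"
      then have "v \<notin> e" using g False by (auto simp: graph_def)
      then show "e \<in> E0" using step.prems(3) e by auto
    qed
    ultimately show ?thesis by (rule step.IH[OF g _ _ t step.prems(5)])
  next
    case vV: True
    show ?thesis
    proof (cases "card V = 3")
      case True
      then show ?thesis using triangle_max_cycle_invariant g t step.prems(5) by blast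
    next
      case False
      then have card: "4 \<le> card V" using t by (simp add: two_connected_def)
      obtain a b where ab: "C = {a, b}" "{a, b} \<in> E0" and deg: "degree_two_vertex E v a b"
        using k_tree_step_degree_two_vertex[OF step.hyps(1-5) g t vV] step.prems(3) by blast
      interpret degree_two_vertex E v a b by (rule deg)
      interpret weighted_degree_two_vertex E v a b w
        using step.prems(5) finite_E g by unfold_locales (auto simp: graph_def, blast)
      have "V - {v} \<subseteq> V0" "E' \<subseteq> E0" using step.prems(2,3) ab(2) by (auto simp: E'_def)
      then have "max_cycle_invariant E' w'"
        by (rule step.IH[OF graph_E'[OF g vV] _ _ two_connected_E'[OF g t vV card]]) (use w'_pos in blast)
      then interpret suppression_step E v a b w by unfold_locales
      show ?thesis by (rule max_cycle_invariant_E)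
    qed
  qed
qed

lemma longest_cycle_iff_max_cycle:
  assumes "graph V E"
  shows "longest_cycle V E c \<longleftrightarrow> max_cycle E (\<lambda>_. 1) c"
proof -
  have "cycle_weight (\<lambda>_. 1) d = length d" if "cycle_in E d" for d
    using that by (rule cycle_weight_one)
  then show ?thesis
    unfolding longest_cycle_def max_cycle_def is_cycle_iff_cycle_in[OF assms] by metis
qed

theorem corollary6p3:
  fixes V :: "'a set" and E :: "'a set set"
  assumes "graph V E"
    and "partial_k_tree 2 V E"
    and "two_connected V E"
  shows "\<exists>v\<in>V. \<forall>c. longest_cycle V E c \<longrightarrow> v \<in> set c"
proof -
  obtain VH EH where H: "k_tree 2 VH EH" "V \<subseteq> VH" "E \<subseteq> EH"
    using assms(2) by (auto simp: partial_k_tree_def)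
  have inv: "max_cycle_invariant E (\<lambda>_. 1)"
    by (rule partial_2_tree_max_cycle_invariant[OF H(1) assms(1) H(2,3) assms(3)]) simp
  obtain x where x: "\<forall>c. max_cycle E (\<lambda>_. 1) c \<longrightarrow> x \<in> set c"
    using max_cycle_invariantD(2)[OF inv] by blast
  obtain c0 where "cycle_in E c0" using max_cycle_invariantD(1)[OF inv] by blast
  have UV: "\<Union>E \<subseteq> V" "finite V" using assms(1) by (auto simp: graph_def)
  then have "finite (\<Union>E)" by (rule finite_subset)
  then obtain c where "max_cycle E (\<lambda>_. 1) c" using \<open>cycle_in E c0\<close> by (rule max_cycle_exists)
  then have "x \<in> V" using x cycle_in_set_subset[of E c] UV by (auto simp: max_cycle_def)
  then show ?thesis using x longest_cycle_iff_max_cycle[OF assms(1)] by blast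
qed

end
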